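(* Let $\mathcal{M}=\langle \mathcal{S}, (\mathcal{A}_s)_{s\in\mathcal{S}}, P, p_0, q\rangle$ be a Markov Decision Process with finite state space $\mathcal{S}$, finite action sets $\mathcal{A}_s$, transition kernel $P(\cdot\mid s,a)$ and expected rewards $r(s,a)$ satisfying $|r(s,a)|\le R$ for all $(s,a)$, and let $\gamma\in(0,1)$ be the discount factor. Let $d$ be a distance on $\mathcal{S}$, let $\varepsilon\ge 0$, and for $s\in\mathcal{S}$ let $\mathcal{A}_s^\varepsilon=\{\bar s\in\mathcal{S}: d(s,\bar s)\le\varepsilon\}$. Let $\pi$ be a (possibly randomized) policy for $\mathcal{M}$ and let $\chi:\mathcal{S}\to\mathcal{S}$ be any attack satisfying $\chi(s)\in\mathcal{A}_s^\varepsilon$ for all $s$; denote by $\pi\circ\chi$ the policy $\pi\circ\chi(\cdot\mid s)=\pi(\cdot\mid \chi(s))$. For $s\in\mathcal{S}$ define $$\alpha_{\pi,\varepsilon}(s)=\max_{\bar s\in\mathcal{A}_s^\varepsilon}\|\pi(\cdot\mid s)-\pi(\cdot\mid\bar s)\|_{TV}.$$ Then $$\|V^\pi-V^{\pi\circ\chi}\|_\infty\le \frac{2\|\alpha_{\pi,\varepsilon}\|_\infty}{1-\gamma}\left(R+\gamma\|V^\pi\|_\infty\right).$$ Moreover, if $\pi$ satisfies, for some $L\ge 0$, $\|\pi(\cdot\mid s)-\pi(\cdot\mid s')\|_{TV}\le L\, d(s,s')$ for all $s,s'\in\mathcal{S}$, then $$\|V^\pi-V^{\pi\circ\chi}\|_\infty\le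 \frac{2L\varepsilon}{1-\gamma}\left(R+\gamma\|V^\pi\|_\infty\right).$$
   Context: A policy $\pi$ maps each state $s$ to a probability distribution $\pi(\cdot\mid s)$ over $\mathcal{A}_s$. The value function of a policy $\pi$ is $V^\pi(s)=\mathbb{E}\big[\sum_{t\ge0}\gamma^t r(s_t^\pi,a_t^\pi)\big]$ where $s_0=s$, $a_t^\pi\sim\pi(\cdot\mid s_t^\pi)$ and $s_{t+1}^\pi\sim P(\cdot\mid s_t^\pi,a_t^\pi)$; equivalently $V^\pi$ is the unique solution of $V^\pi(s)=\mathbb{E}_{a\sim\pi(\cdot\mid s)}\big[r(s,a)+\gamma\,\mathbb{E}_{s'\sim P(\cdot\mid s,a)}V^\pi(s')\big]$. For $V\in\mathbb{R}^{\mathcal{S}}$, $\|V\|_\infty=\max_{s\in\mathcal{S}}|V(s)|$; for $\alpha:\mathcal{S}\to\mathbb{R}$, $\|\alpha\|_\infty=\max_s|\alpha(s)|$. The total variation distance between distributions $f_1,f_2$ on a finite set $K$ is $\|f_1-f_2\|_{TV}=\tfrac12\sum_{x\in K}|f_1(x)-f_2(x)|$. *)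

theory Defs
  imports Complex_Main
begin

text \<open>Finite MDP with finite state type 's and a common finite action type 'a.
  A distribution on a finite type is a nonnegative function summing to 1.\<close>

definition is_dist :: "('x::finite \<Rightarrow> real) \<Rightarrow> bool" where
  "is_dist f \<longleftrightarrow> (\<forall>x. 0 \<le> f x) \<and> (\<Sum>x\<in>UNIV. f x) = 1"

definition is_policy :: "('s::finite \<Rightarrow> 'a::finite \<Rightarrow> real) \<Rightarrow> bool" where
  "is_policy \<pi> \<longleftrightarrow> (\<forall>s. is_dist (\<pi> s))"

definition is_kernel :: "('s::finite \<Rightarrow> 'a::finite \<Rightarrow> 's \<Rightarrow> real) \<Rightarrow> bool" where
  "is_kernel P \<longleftrightarrow> (\<forall>s a. is_dist (P s a))"

definition value_fun ::
  "('s::finite \<Rightarrow> 'a::finite \<Rightarrow> 's \<Rightarrow> real) \<Rightarrow> ('s \<Rightarrow> 'a \<Rightarrow> real) \<Rightarrow> real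
     \<Rightarrow> ('s \<Rightarrow> 'a \<Rightarrow> real) \<Rightarrow> ('s \<Rightarrow> real)" where
  "value_fun P r \<gamma> \<pi> = (THE V. \<forall>s. V s =
      (\<Sum>a\<in>UNIV. \<pi> s a * (r s a + \<gamma> * (\<Sum>s'\<in>UNIV. P s a s' * V s'))))"

definition sup_norm :: "('s::finite \<Rightarrow> real) \<Rightarrow> real" where
  "sup_norm V = Max (range (\<lambda>s. \<bar>V s\<bar>))"

definition tv_dist :: "('x::finite \<Rightarrow> real) \<Rightarrow> ('x \<Rightarrow> real) \<Rightarrow> real" where
  "tv_dist f1 f2 = (1/2) * (\<Sum>x\<in>UNIV. \<bar>f1 x - f2 x\<bar>)"

definition is_distance :: "('s \<Rightarrow> 's \<Rightarrow> real) \<Rightarrow> bool" where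
  "is_distance d \<longleftrightarrow> (\<forall>x y. 0 \<le> d x y) \<and> (\<forall>x y. d x y = 0 \<longleftrightarrow> x = y)
     \<and> (\<forall>x y. d x y = d y x) \<and> (\<forall>x y z. d x z \<le> d x y + d y z)"

definition adm_set :: "('s \<Rightarrow> 's \<Rightarrow> real) \<Rightarrow> real \<Rightarrow> 's \<Rightarrow> 's set" where
  "adm_set d \<epsilon> s = {sb. d s sb \<le> \<epsilon>}"

definition alpha_pe :: "('s::finite \<Rightarrow> 'a::finite \<Rightarrow> real) \<Rightarrow> ('s \<Rightarrow> 's \<Rightarrow> real) \<Rightarrow> real \<Rightarrow> 's \<Rightarrow> real" where
  "alpha_pe \<pi> d \<epsilon> s = Max ((\<lambda>sb. tv_dist (\<pi> s) (\<pi> sb)) ` adm_set d \<epsilon> s)"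

end

(*
  Let D = V^pi - V^nu for two policies pi, nu. Subtracting their Bellman equations gives
    D(s) = sum_a (pi(a|s) - nu(a|s)) Q^pi(s,a) + gamma E_{a ~ nu(.|s), s' ~ P(.|s,a)} D(s'),
  where |Q^pi(s,a)| = |r(s,a) + gamma E V^pi(s')| <= R + gamma ||V^pi||.  The first term is at
  most 2 TV(pi(.|s), nu(.|s)) (R + gamma ||V^pi||), the second at most gamma ||D||; taking the
  maximum over s and solving for ||D|| bounds it by 2 delta/(1 - gamma) (R + gamma ||V^pi||)
  whenever delta bounds the TV distances uniformly.  For nu = pi o chi both ||alpha|| and
  L eps are such bounds.  The same contraction estimate shows that I - gamma P^nu is injective,
  hence invertible in finite dimension, so the Bellman equation defining V^nu has a solution.
*)
theory Submission
  imports Defs "HOL-Analysis.Finite_Cartesian_Product"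
begin

unbundle no vec_syntax \<comment> \<open>frees the binder \<open>\<chi>\<close> for the name of the attack\<close>

lemma abs_le_sup_norm: "\<bar>V s\<bar> \<le> sup_norm V"
  unfolding sup_norm_def by (rule Max_ge) auto

lemma sup_norm_le: "(\<And>s. \<bar>V s\<bar> \<le> c) \<Longrightarrow> sup_norm V \<le> c"
  unfolding sup_norm_def by (rule Max.boundedI) auto

lemma sup_norm_le_of_contraction:
  fixes D :: "'s::finite \<Rightarrow> real"
  assumes "\<And>s. \<bar>D s\<bar> \<le> C + \<gamma> * sup_norm D" and "\<gamma> < 1"
  shows "sup_norm D \<le> C / (1 - \<gamma>)"
proof -
  have "sup_norm D \<le> C + \<gamma> * sup_norm D" by (rule sup_norm_le) (rule assms(1))
  then show ?thesis using assms(2) by (simp add: field_simps)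
qed

lemma abs_sum_dist_le_sup_norm:
  assumes "is_dist w"
  shows "\<bar>\<Sum>x\<in>UNIV. w x * f x\<bar> \<le> sup_norm f"
proof -
  have "\<bar>\<Sum>x\<in>UNIV. w x * f x\<bar> \<le> (\<Sum>x\<in>UNIV. w x * sup_norm f)"
    using assms abs_le_sup_norm[of f] unfolding is_dist_def
    by (intro order_trans[OF sum_abs] sum_mono) (simp add: abs_mult mult_left_mono)
  also have "\<dots> = sup_norm f"
    using assms unfolding is_dist_def by (simp add: sum_distrib_right[symmetric])
  finally show ?thesis .
qed

lemma abs_sum_diff_le_tv_dist:
  assumes "\<And>x. \<bar>h x\<bar> \<le> B"
  shows "\<bar>\<Sum>x\<in>UNIV. (f x - g x) * h x\<bar> \<le> 2 * tv_dist f g * B"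
proof -
  have "\<bar>\<Sum>x\<in>UNIV. (f x - g x) * h x\<bar> \<le> (\<Sum>x\<in>UNIV. \<bar>f x - g x\<bar> * B)"
    using assms by (intro order_trans[OF sum_abs] sum_mono) (simp add: abs_mult mult_left_mono)
  also have "\<dots> = 2 * tv_dist f g * B"
    unfolding tv_dist_def by (simp add: sum_distrib_right)
  finally show ?thesis .
qed

definition policy_step ::
  "('s::finite \<Rightarrow> 'a::finite \<Rightarrow> 's \<Rightarrow> real) \<Rightarrow> ('s \<Rightarrow> 'a \<Rightarrow> real) \<Rightarrow> ('s \<Rightarrow> real) \<Rightarrow> 's \<Rightarrow> real" where
  "policy_step P \<mu> V s = (\<Sum>a\<in>UNIV. \<mu> s a * (\<Sum>s'\<in>UNIV. P s a s' * V s'))"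

definition q_value ::
  "('s::finite \<Rightarrow> 'a \<Rightarrow> 's \<Rightarrow> real) \<Rightarrow> ('s \<Rightarrow> 'a \<Rightarrow> real) \<Rightarrow> real \<Rightarrow> ('s \<Rightarrow> real) \<Rightarrow> 's \<Rightarrow> 'a \<Rightarrow> real" where
  "q_value P r \<gamma> V s a = r s a + \<gamma> * (\<Sum>s'\<in>UNIV. P s a s' * V s')"

lemma abs_policy_step_le:
  assumes "is_kernel P" and "is_policy \<mu>"
  shows "\<bar>policy_step P \<mu> V s\<bar> \<le> sup_norm V"
proof -
  have "\<bar>policy_step P \<mu> V s\<bar> \<le> sup_norm (\<lambda>a. \<Sum>s'\<in>UNIV. P s a s' * V s')"
    unfolding policy_step_def using assms(2) unfolding is_policy_def
    by (intro abs_sum_dist_le_sup_norm) auto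
  also have "\<dots> \<le> sup_norm V"
    using assms(1) unfolding is_kernel_def by (intro sup_norm_le abs_sum_dist_le_sup_norm) auto
  finally show ?thesis .
qed

lemma policy_step_add:
  "policy_step P \<mu> (\<lambda>s. V s + W s) s = policy_step P \<mu> V s + policy_step P \<mu> W s"
  unfolding policy_step_def by (simp add: sum.distrib distrib_left)

lemma policy_step_diff:
  "policy_step P \<mu> (\<lambda>s. V s - W s) s = policy_step P \<mu> V s - policy_step P \<mu> W s"
  unfolding policy_step_def by (simp add: sum_subtractf right_diff_distrib)

lemma policy_step_scale:
  "policy_step P \<mu> (\<lambda>s. c * V s) s = c * policy_step P \<mu> V s"
  unfolding policy_step_def by (simp add: sum_distrib_left mult.left_commute)

lemma sum_policy_q_value:
  "(\<Sum>a\<in>UNIV. \<mu> s a * q_value P r \<gamma> V s a) = (\<Sum>a\<in>UNIV. \<mu> s a * r s a) + \<gamma> * policy_step P \<mu> V s"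
  unfolding q_value_def policy_step_def by (simp add: sum.distrib sum_distrib_left algebra_simps)

lemma q_value_diff:
  "q_value P r \<gamma> V s a - q_value P r' \<gamma> W s a
     = r s a - r' s a + \<gamma> * (\<Sum>s'\<in>UNIV. P s a s' * (V s' - W s'))"
  unfolding q_value_def by (simp add: algebra_simps sum_subtractf)

lemma abs_q_value_le:
  assumes "is_kernel P" and "\<And>s a. \<bar>r s a\<bar> \<le> R" and "0 \<le> \<gamma>"
  shows "\<bar>q_value P r \<gamma> V s a\<bar> \<le> R + \<gamma> * sup_norm V"
proof -
  have "\<bar>\<Sum>s'\<in>UNIV. P s a s' * V s'\<bar> \<le> sup_norm V"
    using assms(1) unfolding is_kernel_def by (intro abs_sum_dist_le_sup_norm) auto
  then have "\<bar>\<gamma> * (\<Sum>s'\<in>UNIV. P s a s' * V s')\<bar> \<le> \<gamma> * sup_norm V"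
    using assms(3) by (simp add: abs_mult mult_left_mono)
  then show ?thesis
    unfolding q_value_def using assms(2)[of s a] abs_triangle_ineq[of "r s a"] by (meson add_mono order_trans)
qed

lemma policy_step_fixed_point_eq_0:
  assumes "is_kernel P" and "is_policy \<mu>" and "0 \<le> \<gamma>" and "\<gamma> < 1"
    and "\<And>s. D s = \<gamma> * policy_step P \<mu> D s"
  shows "D = (\<lambda>_. 0)"
proof -
  have "\<bar>D s\<bar> \<le> 0 + \<gamma> * sup_norm D" for s
    using assms(5)[of s] abs_policy_step_le[OF assms(1,2), of D s] assms(3)
    by (simp add: abs_mult mult_left_mono)
  then have "sup_norm D \<le> 0" using sup_norm_le_of_contraction assms(4) by fastforce
  then show ?thesis using abs_le_sup_norm[of D] by (simp add: fun_eq_iff) (meson abs_le_zero_iff order_trans)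
qed

lemma surj_if_inj_linear_real_fun:
  fixes T :: "('n::finite \<Rightarrow> real) \<Rightarrow> 'n \<Rightarrow> real"
  assumes add: "\<And>V W. T (\<lambda>x. V x + W x) = (\<lambda>x. T V x + T W x)"
    and scale: "\<And>c V. T (\<lambda>x. c * V x) = (\<lambda>x. c * T V x)"
    and "inj T"
  shows "surj T"
proof -
  define f where "f v = vec_lambda (T (vec_nth v))" for v :: "real ^ 'n"
  have "vec_nth (v + w) = (\<lambda>x. vec_nth v x + vec_nth w x)"
    and "vec_nth (c *\<^sub>R v) = (\<lambda>x. c * vec_nth v x)" for v w :: "real ^ 'n" and c
    by (simp_all add: fun_eq_iff)
  then have "linear f"
    by (intro linearI) (simp_all add: f_def vec_eq_iff add scale)
  moreover have "inj f"
    using \<open>inj T\<close> unfolding f_def inj_def by (metis vec_lambda_inverse UNIV_I vec_nth_inject)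
  ultimately have "surj f" using linear_injective_imp_surjective by blast
  then show ?thesis
    unfolding f_def surj_def by (metis vec_lambda_inverse UNIV_I)
qed

lemma bellman_equation_ex1:
  assumes "is_kernel P" and "is_policy \<mu>" and "0 \<le> \<gamma>" and "\<gamma> < 1"
  shows "\<exists>!V. \<forall>s. V s = (\<Sum>a\<in>UNIV. \<mu> s a * q_value P r \<gamma> V s a)"
proof -
  define T where "T V = (\<lambda>s. V s - \<gamma> * policy_step P \<mu> V s)" for V
  have "inj T"
  proof (rule injI)
    fix V W assume "T V = T W"
    then have "V s - W s = \<gamma> * policy_step P \<mu> (\<lambda>s. V s - W s) s" for s
      unfolding T_def policy_step_diff by (simp add: fun_eq_iff algebra_simps)
    then have "(\<lambda>s. V s - W s) = (\<lambda>_. 0)"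
      by (rule policy_step_fixed_point_eq_0[OF assms])
    then show "V = W" by (simp add: fun_eq_iff)
  qed
  moreover have "surj T"
    by (rule surj_if_inj_linear_real_fun[OF _ _ \<open>inj T\<close>])
      (simp_all add: T_def policy_step_add policy_step_scale algebra_simps)
  ultimately have "bij T" by (simp add: bij_def)
  have bellman_iff: "(\<forall>s. V s = (\<Sum>a\<in>UNIV. \<mu> s a * q_value P r \<gamma> V s a))
      \<longleftrightarrow> T V = (\<lambda>s. \<Sum>a\<in>UNIV. \<mu> s a * r s a)" for V
    unfolding T_def sum_policy_q_value fun_eq_iff by (simp add: diff_eq_eq)
  show ?thesis
    unfolding bellman_iff using \<open>bij T\<close> by (simp add: bij_iff)
qed

lemma value_fun_eq:
  assumes "is_kernel P" and "is_policy \<mu>" and "0 \<le> \<gamma>" and "\<gamma> < 1"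
  shows "value_fun P r \<gamma> \<mu> s = (\<Sum>a\<in>UNIV. \<mu> s a * q_value P r \<gamma> (value_fun P r \<gamma> \<mu>) s a)"
  using theI'[OF bellman_equation_ex1[OF assms]] unfolding value_fun_def q_value_def by blast

lemma value_fun_diff_eq:
  fixes r :: "'s::finite \<Rightarrow> 'a::finite \<Rightarrow> real"
  assumes "is_kernel P" and "is_policy \<mu>" and "is_policy \<nu>" and "0 \<le> \<gamma>" and "\<gamma> < 1"
  defines "V \<equiv> value_fun P r \<gamma> \<mu>" and "W \<equiv> value_fun P r \<gamma> \<nu>"
  shows "V s - W s = (\<Sum>a\<in>UNIV. (\<mu> s a - \<nu> s a) * q_value P r \<gamma> V s a)
                     + \<gamma> * policy_step P \<nu> (\<lambda>s. V s - W s) s"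
proof -
  have "(\<Sum>a\<in>UNIV. \<nu> s a * q_value P r \<gamma> V s a) - W s
      = (\<Sum>a\<in>UNIV. \<nu> s a * (q_value P r \<gamma> V s a - q_value P r \<gamma> W s a))"
    unfolding W_def value_fun_eq[OF assms(1,3-5), of r s]
    by (simp add: right_diff_distrib sum_subtractf)
  also have "\<dots> = \<gamma> * policy_step P \<nu> (\<lambda>s. V s - W s) s"
    unfolding q_value_diff policy_step_def by (simp add: sum_distrib_left mult.left_commute)
  finally show ?thesis
    unfolding V_def value_fun_eq[OF assms(1,2,4,5), of r s]
    by (simp add: left_diff_distrib sum_subtractf)
qed

lemma sup_norm_value_fun_diff_le:
  fixes r :: "'s::finite \<Rightarrow> 'a::finite \<Rightarrow> real"
  assumes "is_kernel P" and "\<And>s a. \<bar>r s a\<bar> \<le> R" and "0 \<le> \<gamma>" and "\<gamma> < 1"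
    and "is_policy \<mu>" and "is_policy \<nu>" and "\<And>s. tv_dist (\<mu> s) (\<nu> s) \<le> \<delta>"
  defines "V \<equiv> value_fun P r \<gamma> \<mu>" and "W \<equiv> value_fun P r \<gamma> \<nu>"
  shows "sup_norm (\<lambda>s. V s - W s) \<le> 2 * \<delta> / (1 - \<gamma>) * (R + \<gamma> * sup_norm V)"
proof -
  define K where "K = R + \<gamma> * sup_norm V"
  have q_le: "\<bar>q_value P r \<gamma> V s a\<bar> \<le> K" for s a
    unfolding K_def by (rule abs_q_value_le[OF assms(1-3)])
  then have "0 \<le> K" by (meson abs_ge_zero order_trans)
  have "\<bar>V s - W s\<bar> \<le> 2 * \<delta> * K + \<gamma> * sup_norm (\<lambda>s. V s - W s)" for s
  proof -
    have "\<bar>\<Sum>a\<in>UNIV. (\<mu> s a - \<nu> s a) * q_value P r \<gamma> V s a\<bar> \<le> 2 * tv_dist (\<mu> s) (\<nu> s) * K"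
      using q_le by (rule abs_sum_diff_le_tv_dist)
    also have "\<dots> \<le> 2 * \<delta> * K"
      using assms(7) \<open>0 \<le> K\<close> by (simp add: mult_right_mono)
    finally have "\<bar>\<Sum>a\<in>UNIV. (\<mu> s a - \<nu> s a) * q_value P r \<gamma> V s a\<bar> \<le> 2 * \<delta> * K" .
    moreover have "\<bar>\<gamma> * policy_step P \<nu> (\<lambda>s. V s - W s) s\<bar> \<le> \<gamma> * sup_norm (\<lambda>s. V s - W s)"
      using abs_policy_step_le[OF assms(1,6)] assms(3) by (simp add: abs_mult mult_left_mono)
    ultimately show ?thesis
      using value_fun_diff_eq[OF assms(1,5,6,3,4), of r s, folded V_def W_def] by linarith
  qed
  then have "sup_norm (\<lambda>s. V s - W s) \<le> 2 * \<delta> * K / (1 - \<gamma>)"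
    by (rule sup_norm_le_of_contraction[OF _ assms(4)])
  then show ?thesis unfolding K_def by simp
qed

lemma tv_dist_le_sup_norm_alpha_pe:
  assumes "sb \<in> adm_set d \<epsilon> s"
  shows "tv_dist (\<pi> s) (\<pi> sb) \<le> sup_norm (alpha_pe \<pi> d \<epsilon>)"
proof -
  have "tv_dist (\<pi> s) (\<pi> sb) \<le> alpha_pe \<pi> d \<epsilon> s"
    unfolding alpha_pe_def using assms by (intro Max_ge) auto
  then show ?thesis using abs_le_sup_norm[of "alpha_pe \<pi> d \<epsilon>" s] by linarith
qed

lemma tv_dist_le_of_lipschitz:
  assumes "\<forall>s s'. tv_dist (\<pi> s) (\<pi> s') \<le> L * d s s'" and "0 \<le> L" and "sb \<in> adm_set d \<epsilon> s"
  shows "tv_dist (\<pi> s) (\<pi> sb) \<le> L * \<epsilon>"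
proof -
  have "L * d s sb \<le> L * \<epsilon>"
    using assms(2,3) unfolding adm_set_def by (simp add: mult_left_mono)
  then show ?thesis using assms(1) by (meson order_trans)
qed

theorem proposition5p1:
  fixes P :: "'s::finite \<Rightarrow> 'a::finite \<Rightarrow> 's \<Rightarrow> real"
    and r :: "'s \<Rightarrow> 'a \<Rightarrow> real"
    and \<pi> :: "'s \<Rightarrow> 'a \<Rightarrow> real"
    and d :: "'s \<Rightarrow> 's \<Rightarrow> real"
    and \<chi> :: "'s \<Rightarrow> 's"
    and R \<gamma> \<epsilon> :: real
  assumes "is_kernel P"
    and "\<forall>s a. \<bar>r s a\<bar> \<le> R"
    and "0 < \<gamma>" and "\<gamma> < 1"
    and "is_distance d"
    and "0 \<le> \<epsilon>"
    and "is_policy \<pi>"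
    and "\<forall>s. \<chi> s \<in> adm_set d \<epsilon> s"
  shows "sup_norm (\<lambda>s. value_fun P r \<gamma> \<pi> s - value_fun P r \<gamma> (\<lambda>s. \<pi> (\<chi> s)) s)
           \<le> 2 * sup_norm (alpha_pe \<pi> d \<epsilon>) / (1 - \<gamma>) * (R + \<gamma> * sup_norm (value_fun P r \<gamma> \<pi>))
    \<and> (\<forall>L. 0 \<le> L \<longrightarrow> (\<forall>s s'. tv_dist (\<pi> s) (\<pi> s') \<le> L * d s s') \<longrightarrow>
         sup_norm (\<lambda>s. value_fun P r \<gamma> \<pi> s - value_fun P r \<gamma> (\<lambda>s. \<pi> (\<chi> s)) s)
           \<le> 2 * L * \<epsilon> / (1 - \<gamma>) * (R + \<gamma> * sup_norm (value_fun P r \<gamma> \<pi>)))"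
proof -
  have "is_policy (\<lambda>s. \<pi> (\<chi> s))" using assms(7) unfolding is_policy_def by simp
  note perturbation_bound = sup_norm_value_fun_diff_le
    [OF assms(1) assms(2)[rule_format] less_imp_le[OF assms(3)] assms(4,7) this]
  have "\<chi> s \<in> adm_set d \<epsilon> s" for s using assms(8) by blast
  note attack_tv_bounds = tv_dist_le_sup_norm_alpha_pe[OF this] tv_dist_le_of_lipschitz[OF _ _ this]
  show ?thesis
    using perturbation_bound[OF attack_tv_bounds(1)] perturbation_bound[OF attack_tv_bounds(2)]
    by (simp add: mult.assoc)
qed

end
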